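(* Let $S^2\subset\mathfrak{su}_2^*\cong\mathbb R^3$ be the coadjoint orbit of a nonzero element, with $SU(2)$ acting by the coadjoint action (i.e. by rotations via $SU(2)\to SO(3)$). Let $(\omega,\mu,\Psi)$ be an $SU(2)$-invariant differential character on the action groupoid $S^2\leftleftarrows SU(2)\times S^2$, i.e. a triple satisfying conditions (1)–(5) below. Then for every $p\in S^2$, $$\Psi\big(0,(-1,p)\big)=\tfrac12\int_{S^2}\omega\pmod{\mathbb Z},$$ where $-1$ is the nontrivial central element of $SU(2)$ (which lies in the stabilizer of $p$).
   Context: Here $G=SU(2)$, $M=S^2$, action groupoid $M\leftleftarrows G\times M$ with $s(g,x)=x=\partial_0$, $t(g,x)=gx=\partial_1$, and $\partial_0,\partial_1,\partial_2$ on composable pairs as usual (forget first factor, compose, forget last factor). A 1-chain on the groupoid is a pair $(\sigma,x)$ with $\sigma$ a smooth singular integral 1-chain on $M$ and $x$ a finite integer combination of points of $G\times M$; its boundary is $\partial\sigma+s_*x-t_*x$; $Z_1$ is the group of 1-chains with zero boundary, with $G$ acting by $g\cdot(\sigma,\sum n_i(h_i,x_i))=(g\circ\sigma,\sum n_i(gh_ig^{-1},gx_i))$. An invariant differential character is a triple $(\omega,\mu,\Psi)$, $\omega\in\Omega^2(M)$, $\mu:M\to\mathfrak g^*$ smooth, $\Psi:Z_1\to\mathbb R/\mathbb Z$ a homomorphism, such that: (1) $\omega$ is closed and $G$-invariant, $\Psi$ is $G$-invariant, $\mu$ is $G$-equivariant; (2) $i_{\varepsilon_X}\omega=-\langle d\mu,X\rangle$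 for $X\in\mathfrak g$, $\varepsilon_X$ the generating vector field; (3) $\Psi(\partial S,0)=\int_S\omega\bmod\mathbb Z$ for every smooth singular 2-chain $S$ on $M$; (4) $\Psi(\sigma_{X,p},(\exp X,p))=\langle\mu(p),X\rangle\bmod\mathbb Z$ for $p\in M$, $X\in\mathfrak g$, where $\sigma_{X,p}(\tau)=\exp(\tau X)p$, $\tau\in[0,1]$; (5) $\Psi(0,(\partial_0)_*x-(\partial_1)_*x+(\partial_2)_*x)=0$ for every composable pair $x$. (Such triples classify $SU(2)$-equivariant principal $S^1$-bundles with invariant connections, $\omega$ being the curvature and $\mu$ the moment map.) *)

theory Defs
  imports "HOL-Analysis.Analysis" "HOL-Library.Poly_Mapping"
begin

primrec Ck_on :: "nat \<Rightarrow> 'a::euclidean_space set \<Rightarrow> ('a \<Rightarrow> 'b::real_normed_vector) \<Rightarrow> bool" where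
  "Ck_on 0 U f = continuous_on U f"
| "Ck_on (Suc k) U f = (continuous_on U f \<and> (\<forall>x\<in>U. f differentiable (at x)) \<and>
       (\<forall>v. Ck_on k U (\<lambda>x. frechet_derivative f (at x) v)))"

definition Cinf_on :: "'a::euclidean_space set \<Rightarrow> ('a \<Rightarrow> 'b::real_normed_vector) \<Rightarrow> bool" where
  "Cinf_on U f \<longleftrightarrow> open U \<and> (\<forall>k. Ck_on k U f)"

definition smooth_map_on :: "'a::euclidean_space set \<Rightarrow> ('a \<Rightarrow> 'b::real_normed_vector) \<Rightarrow> bool" where
  "smooth_map_on A f \<longleftrightarrow> (\<exists>U F. open U \<and> A \<subseteq> U \<and> Cinf_on U F \<and> (\<forall>x\<in>A. F x = f x))"

section \<open>SU(2) as unit quaternions, acting on R^3 = su(2)^* by rotations\<close>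

type_synonym quat = "real \<times> (real^3)"

definition SU2 :: "quat set" where
  "SU2 = {(a, v). a\<^sup>2 + (norm v)\<^sup>2 = 1}"

definition qmul :: "quat \<Rightarrow> quat \<Rightarrow> quat" where
  "qmul q p = (fst q * fst p - snd q \<bullet> snd p,
               fst q *\<^sub>R snd p + fst p *\<^sub>R snd q + cross3 (snd q) (snd p))"

definition qinv :: "quat \<Rightarrow> quat" where
  "qinv q = (fst q, - snd q)"

definition qminus1 :: quat where
  "qminus1 = (-1, 0)"

text \<open>The coadjoint action of SU(2) on su(2)^* = R^3 (q x q^{-1}), i.e. rotation via SU(2) \<rightarrow> SO(3).\<close>
definition rot :: "quat \<Rightarrow> real^3 \<Rightarrow> real^3" where
  "rot q x = ((fst q)\<^sup>2 - (norm (snd q))\<^sup>2) *\<^sub>R x + (2 * (snd q \<bullet> x)) *\<^sub>R snd q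
             + (2 * fst q) *\<^sub>R cross3 (snd q) x"

text \<open>Exponential map su(2) = R^3 \<rightarrow> SU(2); X \<mapsto> exp of the imaginary quaternion X/2.
  The generating vector field of X on R^3 is x \<mapsto> X \<times> x; the pairing g^* \<times> g is the dot product.\<close>
definition qexp :: "real^3 \<Rightarrow> quat" where
  "qexp X = (cos (norm X / 2), (if X = 0 then 0 else sin (norm X / 2) / norm X) *\<^sub>R X)"

definition coadj_orbit :: "real^3 \<Rightarrow> (real^3) set" where
  "coadj_orbit \<xi> = (\<lambda>g. rot g \<xi>) ` SU2"

definition Delta1 :: "real set" where "Delta1 = {0..1}"
definition Delta2 :: "(real \<times> real) set" where
  "Delta2 = {(s, t). 0 \<le> s \<and> 0 \<le> t \<and> s + t \<le> 1}"

type_synonym simplex1 = "real \<Rightarrow> real^3"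
type_synonym simplex2 = "real \<times> real \<Rightarrow> real^3"
type_synonym gpoint = "quat \<times> (real^3)"

definition simp1 :: "(real^3) set \<Rightarrow> simplex1 set" where
  "simp1 M = {\<sigma>. \<sigma> \<in> extensional Delta1 \<and> \<sigma> ` Delta1 \<subseteq> M \<and> smooth_map_on Delta1 \<sigma>}"

definition simp2 :: "(real^3) set \<Rightarrow> simplex2 set" where
  "simp2 M = {S. S \<in> extensional Delta2 \<and> S ` Delta2 \<subseteq> M \<and> smooth_map_on Delta2 S}"

text \<open>Faces of a 2-simplex (vertices e0=(0,0), e1=(1,0), e2=(0,1)); face i omits e_i.\<close>
definition face :: "nat \<Rightarrow> simplex2 \<Rightarrow> simplex1" where
  "face i S = restrict (\<lambda>\<tau>. S (if i = 0 then (1 - \<tau>, \<tau>) else if i = 1 then (0, \<tau>) else (\<tau>, 0))) Delta1"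

definition bd1 :: "(simplex1 \<Rightarrow>\<^sub>0 int) \<Rightarrow> (real^3 \<Rightarrow>\<^sub>0 int)" where
  "bd1 = frag_extend (\<lambda>\<sigma>. frag_of (\<sigma> 1) - frag_of (\<sigma> 0))"

definition bd2 :: "(simplex2 \<Rightarrow>\<^sub>0 int) \<Rightarrow> (simplex1 \<Rightarrow>\<^sub>0 int)" where
  "bd2 = frag_extend (\<lambda>S. frag_of (face 0 S) - frag_of (face 1 S) + frag_of (face 2 S))"

type_synonym gchain1 = "(simplex1 \<Rightarrow>\<^sub>0 int) \<times> (gpoint \<Rightarrow>\<^sub>0 int)"

definition src_push :: "(gpoint \<Rightarrow>\<^sub>0 int) \<Rightarrow> (real^3 \<Rightarrow>\<^sub>0 int)" where
  "src_push = frag_extend (\<lambda>gx. frag_of (snd gx))"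

definition tgt_push :: "(gpoint \<Rightarrow>\<^sub>0 int) \<Rightarrow> (real^3 \<Rightarrow>\<^sub>0 int)" where
  "tgt_push = frag_extend (\<lambda>gx. frag_of (rot (fst gx) (snd gx)))"

definition gbd :: "gchain1 \<Rightarrow> (real^3 \<Rightarrow>\<^sub>0 int)" where
  "gbd c = bd1 (fst c) + src_push (snd c) - tgt_push (snd c)"

definition Z1 :: "(real^3) set \<Rightarrow> gchain1 set" where
  "Z1 M = {c::gchain1. (Poly_Mapping.keys (fst c) \<subseteq> simp1 M) \<and> (Poly_Mapping.keys (snd c) \<subseteq> (SU2 \<times> M)) \<and> gbd c = 0}"

definition gadd :: "gchain1 \<Rightarrow> gchain1 \<Rightarrow> gchain1" where
  "gadd a b = (fst a + fst b, snd a + snd b)"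

definition gact :: "quat \<Rightarrow> gchain1 \<Rightarrow> gchain1" where
  "gact g c = (frag_extend (\<lambda>\<sigma>. frag_of (restrict (rot g \<circ> \<sigma>) Delta1)) (fst c),
               frag_extend (\<lambda>hx. frag_of (qmul (qmul g (fst hx)) (qinv g), rot g (snd hx))) (snd c))"

definition sigmaXp :: "real^3 \<Rightarrow> real^3 \<Rightarrow> simplex1" where
  "sigmaXp X p = restrict (\<lambda>\<tau>. rot (qexp (\<tau> *\<^sub>R X)) p) Delta1"

text \<open>A 2-form on M \<subseteq> R^3 is given by \<omega> x u v for x \<in> M and u, v tangent at x;
  it is smooth iff it is the restriction of a smooth 2-form B(x)\<bullet>(u\<times>v) on a neighbourhood.\<close>
definition tangent :: "real^3 \<Rightarrow> real^3 \<Rightarrow> bool" where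
  "tangent x u \<longleftrightarrow> u \<bullet> x = 0"

definition smooth_2form :: "(real^3) set \<Rightarrow> (real^3 \<Rightarrow> real^3 \<Rightarrow> real^3 \<Rightarrow> real) \<Rightarrow> bool" where
  "smooth_2form M \<omega> \<longleftrightarrow> (\<exists>U B. open U \<and> M \<subseteq> U \<and> Cinf_on U B \<and>
      (\<forall>x\<in>M. \<forall>u v. tangent x u \<longrightarrow> tangent x v \<longrightarrow> \<omega> x u v = B x \<bullet> cross3 u v))"

definition int2 :: "(real^3 \<Rightarrow> real^3 \<Rightarrow> real^3 \<Rightarrow> real) \<Rightarrow> simplex2 \<Rightarrow> real" where
  "int2 \<omega> S = integral Delta2 (\<lambda>z. \<omega> (S z) (frechet_derivative S (at z within Delta2) (1, 0))
                                            (frechet_derivative S (at z within Delta2) (0, 1)))"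

definition int2_chain :: "(real^3 \<Rightarrow> real^3 \<Rightarrow> real^3 \<Rightarrow> real) \<Rightarrow> (simplex2 \<Rightarrow>\<^sub>0 int) \<Rightarrow> real" where
  "int2_chain \<omega> c = (\<Sum>S\<in>Poly_Mapping.keys c. of_int (Poly_Mapping.lookup c S) * int2 \<omega> S)"

text \<open>Integral over the sphere of radius r, oriented by the outward normal (spherical coordinates).\<close>
definition sphere_param :: "real \<Rightarrow> real \<times> real \<Rightarrow> real^3" where
  "sphere_param r z = r *\<^sub>R vector [sin (fst z) * cos (snd z), sin (fst z) * sin (snd z), cos (fst z)]"

definition int_sphere :: "real \<Rightarrow> (real^3 \<Rightarrow> real^3 \<Rightarrow> real^3 \<Rightarrow> real) \<Rightarrow> real" where
  "int_sphere r \<omega> = integral ({0..pi} \<times> {0..2*pi})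
     (\<lambda>z. \<omega> (sphere_param r z) (frechet_derivative (sphere_param r) (at z) (1, 0))
                                (frechet_derivative (sphere_param r) (at z) (0, 1)))"

end

theory Submission imports Defs begin

(* The coadjoint orbit M of xi is the round sphere of radius r = |xi|: every vector
   of length r is the image of xi under a half-turn rot (0, m).  Equivariance of the moment map
   under the half-turn about x forces mu to be radial, mu x = c x, so its derivative along a
   tangent vector u is c u.  The moment map condition (2) then determines omega completely,
   omega_x(v, u) = - c u.(x cross v) / r^2, and integration in spherical coordinates gives
   int_{S^2} omega = - 4 pi c r.  On the groupoid side, exp X fixes p whenever X is parallel
   to p, and then sigma_{X,p} is the constant path at p.  For X = -(2 pi / r) p we get
   exp X = -1, and conditions (4), (5) together with additivity of Psi give
   Psi(0, (-1, p)) = <mu p, X> = - 2 pi c r, which is half of the integral. *)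

lemma inner3: "(x::real^3) \<bullet> y = x$1*y$1 + x$2*y$2 + x$3*y$3"
  by (simp add: inner_vec_def sum_3)

lemma cross3_components:
  "cross3 x y $ 1 = x$2*y$3 - x$3*y$2" "cross3 x y $ 2 = x$3*y$1 - x$1*y$3"
  "cross3 x y $ 3 = x$1*y$2 - x$2*y$1"
  by (simp_all add: cross3_def)

lemma norm3_squared: "(norm (x::real^3))^2 = x$1^2 + x$2^2 + x$3^2"
  by (simp only: power2_norm_eq_inner inner3) (simp add: power2_eq_square)

text \<open>The vector triple product (x \<times> v) \<times> x, used to invert v \<mapsto> X with X \<times> x = v.\<close>
lemma cross3_cross3_self: "cross3 (cross3 x v) x = (x \<bullet> x) *\<^sub>R v - (x \<bullet> v) *\<^sub>R x"
  by (simp add: vec_eq_iff forall_3 cross3_components inner3 algebra_simps)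

section \<open>The rotation action of SU(2) and its orbits\<close>

lemma rot_inner_self:
  assumes "q \<in> SU2"
  shows "rot q x \<bullet> rot q x = x \<bullet> x"
proof -
  obtain a v where q: "q = (a, v)" by (cases q)
  let ?w = "v$1^2 + v$2^2 + v$3^2"
  have unit: "a^2 + ?w = 1" using assms q by (simp add: SU2_def norm3_squared add.assoc)
  have "rot q x \<bullet> rot q x = (a^2 + ?w)^2 * (x \<bullet> x)"
    unfolding q rot_def snd_conv fst_conv norm3_squared
    by (simp add: inner3 cross3_components norm3_squared power2_eq_square algebra_simps)
  then show ?thesis using unit by simp
qed

lemma rot_norm: "q \<in> SU2 \<Longrightarrow> norm (rot q x) = norm x"
  by (metis rot_inner_self norm_eq_sqrt_inner)

lemma rot_scaleR: "rot q (c *\<^sub>R x) = c *\<^sub>R rot q x"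
  by (simp add: rot_def cross_mult_right algebra_simps)

lemma rot_half_turn: "norm m = 1 \<Longrightarrow> rot (0, m) y = (2 * (m \<bullet> y)) *\<^sub>R m - y"
  by (simp add: rot_def)

lemma half_turn_in_SU2: "norm m = 1 \<Longrightarrow> (0, m) \<in> SU2"
  by (simp add: SU2_def)

lemma exists_unit_orthogonal: "\<exists>m::real^3. norm m = 1 \<and> m \<bullet> x = 0"
proof -
  define m0 :: "real^3"
    where "m0 = (if x$1 = 0 \<and> x$2 = 0 then vector [1,0,0] else vector [-x$2, x$1, 0])"
  have "m0 \<noteq> 0" unfolding m0_def by (auto simp: vec_eq_iff forall_3)
  moreover have "m0 \<bullet> x = 0" unfolding m0_def by (simp add: inner3)
  ultimately show ?thesis by (intro exI[of _ "sgn m0"]) (simp add: sgn_div_norm norm_sgn)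
qed

text \<open>SU(2) acts transitively on each sphere: a half-turn about the axis \<xi> + y
  (or about an axis orthogonal to \<xi> if y = - \<xi>) maps \<xi> to y.\<close>
lemma rot_transitive:
  fixes \<xi> y :: "real^3"
  assumes "norm y = norm \<xi>"
  shows "\<exists>g\<in>SU2. rot g \<xi> = y"
proof (cases "\<xi> + y = 0")
  case True
  obtain m :: "real^3" where m: "norm m = 1" "m \<bullet> \<xi> = 0" using exists_unit_orthogonal by blast
  have "rot (0, m) \<xi> = y" using m add.inverse_unique[OF True] by (simp add: rot_half_turn)
  then show ?thesis using half_turn_in_SU2[OF m(1)] by blast
next
  case False
  define m where "m = (1 / norm (\<xi> + y)) *\<^sub>R (\<xi> + y)"
  have nm: "norm m = 1" using False by (simp add: m_def)
  have "y \<bullet> y = \<xi> \<bullet> \<xi>" using assms by (metis norm_eq_sqrt_inner real_sqrt_eq_iff)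
  then have ns: "(norm (\<xi> + y))^2 = 2 * (\<xi> \<bullet> \<xi> + \<xi> \<bullet> y)"
    by (simp add: power2_norm_eq_inner inner_add inner_commute)
  have nonzero: "(norm (\<xi> + y))^2 \<noteq> 0" using False by simp
  have "rot (0, m) \<xi> = (2 * (m \<bullet> \<xi>)) *\<^sub>R m - \<xi>" using nm by (rule rot_half_turn)
  also have "(2 * (m \<bullet> \<xi>)) *\<^sub>R m = (2 * ((\<xi> + y) \<bullet> \<xi>) / (norm (\<xi> + y))^2) *\<^sub>R (\<xi> + y)"
    by (simp add: m_def power2_eq_square)
  also have "2 * ((\<xi> + y) \<bullet> \<xi>) / (norm (\<xi> + y))^2 = 1"
    using nonzero unfolding ns by (simp add: inner_add inner_commute)
  finally have "rot (0, m) \<xi> = y" by simp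
  then show ?thesis using half_turn_in_SU2[OF nm] by blast
qed

lemma coadj_orbit_eq_sphere: "coadj_orbit \<xi> = sphere 0 (norm \<xi>)"
proof
  show "coadj_orbit \<xi> \<subseteq> sphere 0 (norm \<xi>)"
    by (auto simp: coadj_orbit_def rot_norm)
  show "sphere 0 (norm \<xi>) \<subseteq> coadj_orbit \<xi>"
    using rot_transitive by (fastforce simp: coadj_orbit_def)
qed

section \<open>The moment map is radial\<close>

text \<open>An equivariant map on an orbit is determined by its value at \<xi>, which is fixed by the
  half-turn about \<xi> and hence parallel to \<xi>.\<close>
lemma equivariant_map_radial:
  fixes \<xi> :: "real^3" and \<mu> :: "real^3 \<Rightarrow> real^3"
  assumes xi: "\<xi> \<noteq> 0" and equiv: "\<forall>g\<in>SU2. \<forall>x\<in>coadj_orbit \<xi>. \<mu> (rot g x) = rot g (\<mu> x)"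
  shows "\<exists>c. \<forall>x\<in>coadj_orbit \<xi>. \<mu> x = c *\<^sub>R x"
proof -
  define m where "m = (1 / norm \<xi>) *\<^sub>R \<xi>"
  have nm: "norm m = 1" using xi by (simp add: m_def)
  have xi_orbit: "\<xi> \<in> coadj_orbit \<xi>" by (simp add: coadj_orbit_eq_sphere)
  have "m \<bullet> \<xi> = norm \<xi>" using xi by (simp add: m_def dot_square_norm power2_eq_square)
  then have "(2 * (m \<bullet> \<xi>)) *\<^sub>R m = 2 *\<^sub>R \<xi>" using xi by (simp add: m_def)
  then have fixes_xi: "rot (0, m) \<xi> = \<xi>" unfolding rot_half_turn[OF nm] by (simp add: scaleR_2)
  have "\<mu> (rot (0, m) \<xi>) = rot (0, m) (\<mu> \<xi>)" using equiv half_turn_in_SU2[OF nm] xi_orbit by blast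
  then have "\<mu> \<xi> + \<mu> \<xi> = (2 * (m \<bullet> \<mu> \<xi>)) *\<^sub>R m"
    using rot_half_turn[OF nm, of "\<mu> \<xi>"] fixes_xi by (simp add: eq_diff_eq)
  then have "2 *\<^sub>R \<mu> \<xi> = 2 *\<^sub>R ((m \<bullet> \<mu> \<xi>) *\<^sub>R m)" by (simp add: scaleR_2)
  then have mm: "\<mu> \<xi> = (m \<bullet> \<mu> \<xi>) *\<^sub>R m" by (subst (asm) scaleR_cancel_left) simp
  define c where "c = (m \<bullet> \<mu> \<xi>) / norm \<xi>"
  have at_xi: "\<mu> \<xi> = c *\<^sub>R \<xi>" unfolding c_def by (subst mm) (simp add: m_def)
  show ?thesis
  proof (intro exI ballI)
    fix x assume "x \<in> coadj_orbit \<xi>"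
    then obtain g where g: "g \<in> SU2" "x = rot g \<xi>" by (auto simp: coadj_orbit_def)
    then have "\<mu> x = rot g (\<mu> \<xi>)" using equiv xi_orbit by blast
    then show "\<mu> x = c *\<^sub>R x" using at_xi g(2) by (simp add: rot_scaleR)
  qed
qed

lemma smooth_map_on_differentiable_within:
  assumes "smooth_map_on M f" and "x \<in> M"
  shows "f differentiable (at x within M)"
proof -
  obtain U F where UF: "M \<subseteq> U" "Cinf_on U F" "\<forall>x\<in>M. F x = f x"
    using assms(1) unfolding smooth_map_on_def by blast
  have "F differentiable (at x)"
    using UF(1,2) assms(2) unfolding Cinf_on_def by (metis Ck_on.simps(2) subsetD)
  then obtain F' where "(F has_derivative F') (at x within M)"
    unfolding differentiable_def using has_derivative_at_withinI by blast
  then have "(f has_derivative F') (at x within M)"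
    by (rule has_derivative_transform_within[where d=1]) (use assms(2) UF(3) in auto)
  then show ?thesis unfolding differentiable_def by blast
qed

lemma frechet_derivative_along_curve:
  assumes diff: "f differentiable (at x within M)"
    and curve: "range \<gamma> \<subseteq> M" "\<gamma> 0 = x" "(\<gamma> has_vector_derivative u) (at 0)"
    and comp: "((\<lambda>t. f (\<gamma> t)) has_vector_derivative w) (at 0)"
  shows "frechet_derivative f (at x within M) u = w"
proof -
  define D where "D = frechet_derivative f (at x within M)"
  have "(f has_derivative D) (at (\<gamma> 0) within range \<gamma>)"
    using diff curve(1,2) frechet_derivative_works has_derivative_subset unfolding D_def by blast
  moreover have "(\<gamma> has_derivative (\<lambda>h. h *\<^sub>R u)) (at 0 within UNIV)"
    using curve(3) by (simp add: has_vector_derivative_def)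
  ultimately have "((\<lambda>t. f (\<gamma> t)) has_derivative (\<lambda>h. D (h *\<^sub>R u))) (at 0)"
    using has_derivative_in_compose by fastforce
  moreover have "((\<lambda>t. f (\<gamma> t)) has_derivative (\<lambda>h. h *\<^sub>R w)) (at 0)"
    using comp by (simp add: has_vector_derivative_def)
  ultimately have "(\<lambda>h. D (h *\<^sub>R u)) = (\<lambda>h. h *\<^sub>R w)" by (rule has_derivative_unique)
  from fun_cong[OF this, of 1] show ?thesis unfolding D_def by simp
qed

lemma great_circle:
  fixes x u :: "real^3"
  assumes r: "r > 0" and x: "norm x = r" and u: "u \<bullet> x = 0"
  shows "\<exists>\<gamma>. range \<gamma> \<subseteq> sphere 0 r \<and> \<gamma> 0 = x \<and> (\<gamma> has_vector_derivative u) (at 0)"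
proof (cases "u = 0")
  case True
  then show ?thesis using x by (intro exI[of _ "\<lambda>t. x"]) (auto intro: derivative_eq_intros)
next
  case False
  define k where "k = norm u / r"
  have k: "k > 0" using False r by (simp add: k_def)
  define \<gamma> where "\<gamma> t = cos (k * t) *\<^sub>R x + (sin (k * t) / k) *\<^sub>R u" for t
  have "norm (\<gamma> t) = r" for t
  proof -
    have "\<gamma> t \<bullet> \<gamma> t = (cos (k*t))^2 * (x \<bullet> x) + (sin (k*t) / k)^2 * (u \<bullet> u)"
      using u by (simp add: \<gamma>_def inner_add inner_commute power2_eq_square algebra_simps)
    also have "(sin (k*t) / k)^2 * (u \<bullet> u) = (sin (k*t))^2 * r^2"
      using k r by (simp add: k_def power_divide dot_square_norm[symmetric] power_mult_distrib)
    also have "x \<bullet> x = r^2" using x by (simp add: dot_square_norm)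
    finally have "\<gamma> t \<bullet> \<gamma> t = r^2" by (simp add: distrib_right[symmetric])
    then show ?thesis using r by (simp add: norm_eq_sqrt_inner)
  qed
  moreover have "(\<gamma> has_vector_derivative
      ((- (sin (k * 0) * k)) *\<^sub>R x + (cos (k * 0) * k / k) *\<^sub>R u)) (at 0)"
    unfolding \<gamma>_def by (auto intro!: derivative_eq_intros)
  ultimately show ?thesis using k by (intro exI[of _ \<gamma>]) (auto simp: \<gamma>_def)
qed

lemma radial_map_derivative:
  fixes \<mu> :: "real^3 \<Rightarrow> real^3"
  assumes r: "r > 0" and smooth: "smooth_map_on (sphere 0 r) \<mu>"
    and radial: "\<forall>x\<in>sphere 0 r. \<mu> x = c *\<^sub>R x"
    and x: "x \<in> sphere 0 r" and u: "u \<bullet> x = 0"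
  shows "frechet_derivative \<mu> (at x within sphere 0 r) u = c *\<^sub>R u"
proof -
  obtain \<gamma> where \<gamma>: "range \<gamma> \<subseteq> sphere 0 r" "\<gamma> 0 = x" "(\<gamma> has_vector_derivative u) (at 0)"
    using great_circle[OF r _ u] x by auto
  have "(\<lambda>t. \<mu> (\<gamma> t)) = (\<lambda>t. c *\<^sub>R \<gamma> t)" using radial \<gamma>(1) by (auto simp: image_subset_iff)
  moreover have "((\<lambda>t. c *\<^sub>R \<gamma> t) has_vector_derivative c *\<^sub>R u) (at 0)"
    using \<gamma>(3) by (rule bounded_linear.has_vector_derivative[OF bounded_linear_scaleR_right])
  ultimately show ?thesis
    using frechet_derivative_along_curve[OF smooth_map_on_differentiable_within[OF smooth x] \<gamma>]
    by simp
qed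

section \<open>The form \<omega> and its integral over the sphere\<close>

text \<open>The moment map condition pins down \<omega>: every tangent vector v at x \<noteq> 0 is X \<times> x for
  X = (x \<times> v)/|x|^2, so \<omega>_x(v, u) = - <D\<mu> u, X>.\<close>
lemma form_from_moment_map:
  fixes x v u :: "real^3"
  assumes x: "x \<noteq> 0" and v: "v \<bullet> x = 0"
    and moment: "\<And>X. \<omega> x (cross3 X x) u = - (D u \<bullet> X)" and Du: "D u = c *\<^sub>R u"
  shows "\<omega> x v u = - (c * (u \<bullet> cross3 x v)) / (x \<bullet> x)"
proof -
  define X where "X = (1 / (x \<bullet> x)) *\<^sub>R cross3 x v"
  have "cross3 X x = v"
    using x v unfolding X_def cross_mult_left cross3_cross3_self by (simp add: inner_commute)
  then have "\<omega> x v u = - (D u \<bullet> X)" using moment by metis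
  then show ?thesis using Du by (simp add: X_def)
qed

lemma integral_sin_0_pi: "integral {0..pi} sin = 2"
proof -
  have "\<And>x. ((\<lambda>x. - cos x) has_real_derivative sin x) (at x within {0..pi})"
    by (auto intro!: derivative_eq_intros)
  then have "(sin has_integral ((- cos pi) - (- cos 0))) {0..pi}"
    using fundamental_theorem_of_calculus[of 0 pi "\<lambda>x. - cos x" sin]
    by (simp add: has_real_derivative_iff_has_vector_derivative)
  then show ?thesis by (simp add: integral_unique)
qed

lemma integral_sin_polar_box: "integral ({0..pi} \<times> {0..2*pi}) (\<lambda>z. K * sin (fst z)) = 4 * pi * K"
proof -
  have box: "{0..pi} \<times> {0..2*pi} = cbox (0::real, 0::real) (pi, 2*pi)"
    by (subst cbox_Pair_eq) (simp only: cbox_interval)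
  have "integral (cbox (0::real, 0::real) (pi, 2*pi)) (\<lambda>z. K * sin (fst z))
      = integral (cbox 0 pi) (\<lambda>x. integral (cbox 0 (2*pi)) (\<lambda>y. K * sin (fst (x, y))))"
    by (rule integral_prod_continuous) (auto intro!: continuous_intros)
  also have "\<dots> = integral {0..pi} (\<lambda>x. (2 * pi * K) * sin x)"
    by (simp add: cbox_interval)
  also have "\<dots> = 4 * pi * K" using integral_sin_0_pi by simp
  finally show ?thesis using box by simp
qed

definition sphere_dpolar :: "real \<Rightarrow> real \<times> real \<Rightarrow> real^3" where
  "sphere_dpolar r z = r *\<^sub>R vector [cos (fst z) * cos (snd z), cos (fst z) * sin (snd z), - sin (fst z)]"

definition sphere_dazimuth :: "real \<Rightarrow> real \<times> real \<Rightarrow> real^3" where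
  "sphere_dazimuth r z = r *\<^sub>R vector [- sin (fst z) * sin (snd z), sin (fst z) * cos (snd z), 0]"

lemma sphere_param_in_axes: "sphere_param r z = (r * sin (fst z) * cos (snd z)) *\<^sub>R axis 1 1
   + (r * sin (fst z) * sin (snd z)) *\<^sub>R axis 2 1 + (r * cos (fst z)) *\<^sub>R axis 3 1"
  by (simp add: sphere_param_def vec_eq_iff forall_3 axis_def)

lemma sphere_param_has_derivative:
  "(sphere_param r has_derivative (\<lambda>h. fst h *\<^sub>R sphere_dpolar r z + snd h *\<^sub>R sphere_dazimuth r z)) (at z)"
  unfolding sphere_param_in_axes[abs_def]
  by (auto intro!: derivative_eq_intros ext
      simp: sphere_dpolar_def sphere_dazimuth_def vec_eq_iff forall_3 axis_def algebra_simps)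

lemma sphere_param_geometry:
  "sphere_param r z \<bullet> sphere_dpolar r z = 0" "sphere_param r z \<bullet> sphere_dazimuth r z = 0"
  "sphere_dazimuth r z \<bullet> cross3 (sphere_param r z) (sphere_dpolar r z) = r^3 * sin (fst z)"
  "norm (sphere_param r z) = \<bar>r\<bar>"
proof -
  have sq: "sin x * sin x = 1 - cos x * cos x" for x :: real
    using sin_cos_squared_add3[of x] by linarith
  have sq2: "sin x * (sin x * y) = y - cos x * (cos x * y)" for x y :: real
    using sq[of x] by (metis mult.assoc left_diff_distrib mult_1)
  show "sphere_param r z \<bullet> sphere_dpolar r z = 0"
    by (simp add: sphere_param_def sphere_dpolar_def inner3 algebra_simps sq)
  show "sphere_param r z \<bullet> sphere_dazimuth r z = 0"
    by (simp add: sphere_param_def sphere_dazimuth_def inner3 algebra_simps)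
  show "sphere_dazimuth r z \<bullet> cross3 (sphere_param r z) (sphere_dpolar r z) = r^3 * sin (fst z)"
    by (simp add: sphere_param_def sphere_dpolar_def sphere_dazimuth_def inner3 cross3_components
        algebra_simps power3_eq_cube sq sq2)
  have "(norm (sphere_param r z))^2 = r^2"
    by (simp only: norm3_squared) (simp add: sphere_param_def algebra_simps power2_eq_square sq sq2)
  then show "norm (sphere_param r z) = \<bar>r\<bar>" by (metis norm_ge_zero real_sqrt_abs real_sqrt_unique)
qed

lemma int_sphere_radial_form:
  assumes r: "r > 0"
    and form: "\<And>x v u. x \<in> sphere 0 r \<Longrightarrow> v \<bullet> x = 0 \<Longrightarrow> u \<bullet> x = 0 \<Longrightarrow>
                 \<omega> x v u = - (c * (u \<bullet> cross3 x v)) / r^2"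
  shows "int_sphere r \<omega> = - 4 * pi * c * r"
proof -
  have integrand: "\<omega> (sphere_param r z) (frechet_derivative (sphere_param r) (at z) (1, 0))
       (frechet_derivative (sphere_param r) (at z) (0, 1)) = (- c * r) * sin (fst z)" for z
  proof -
    have deriv: "frechet_derivative (sphere_param r) (at z)
        = (\<lambda>h. fst h *\<^sub>R sphere_dpolar r z + snd h *\<^sub>R sphere_dazimuth r z)"
      using frechet_derivative_at[OF sphere_param_has_derivative] by simp
    have "sphere_param r z \<in> sphere 0 r" using sphere_param_geometry(4)[of r z] r by simp
    then have "\<omega> (sphere_param r z) (sphere_dpolar r z) (sphere_dazimuth r z)
        = - (c * (sphere_dazimuth r z \<bullet> cross3 (sphere_param r z) (sphere_dpolar r z))) / r^2"
      using form sphere_param_geometry(1,2) by (simp add: inner_commute)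
    also have "\<dots> = (- c * r) * sin (fst z)"
      using r by (simp add: sphere_param_geometry(3) power2_eq_square power3_eq_cube)
    finally show ?thesis unfolding deriv by simp
  qed
  show ?thesis unfolding int_sphere_def integrand integral_sin_polar_box by simp
qed

section \<open>The character \<Psi> on the stabiliser of a point\<close>

lemma rot_fixes_axis:
  assumes "a^2 + (norm (t *\<^sub>R p))^2 = 1"
  shows "rot (a, t *\<^sub>R p) p = p"
proof -
  have "(norm (t *\<^sub>R p))^2 = t*t*(p \<bullet> p)" by (simp only: power2_norm_eq_inner) simp
  then have "rot (a, t *\<^sub>R p) p = (a^2 + (norm (t *\<^sub>R p))^2) *\<^sub>R p"
    unfolding rot_def fst_conv snd_conv
    by (simp add: cross_mult_left algebra_simps power2_eq_square scaleR_add_left[symmetric]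
        del: scaleR_add_left)
  then show ?thesis using assms by simp
qed

lemma qexp_in_SU2: "qexp X \<in> SU2"
  by (cases "X = 0") (auto simp: qexp_def SU2_def)

lemma rot_qexp_axis: "rot (qexp (t *\<^sub>R p)) p = p"
proof -
  obtain a s where q: "qexp (t *\<^sub>R p) = (a, (s * t) *\<^sub>R p)"
    unfolding qexp_def by auto
  show ?thesis using qexp_in_SU2[of "t *\<^sub>R p"] unfolding q SU2_def by (simp add: rot_fixes_axis)
qed

lemma sigmaXp_axis: "sigmaXp (k *\<^sub>R p) p = restrict (\<lambda>\<tau>. p) Delta1"
  unfolding sigmaXp_def using rot_qexp_axis[of "_ * k" p] by (simp add: scaleR_scaleR)

lemma Ck_on_const: "Ck_on k U (\<lambda>x. p)"
  by (induction k arbitrary: p) auto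

lemma const_path_cycle:
  assumes "p \<in> M"
  shows "(frag_of (restrict (\<lambda>\<tau>. p) Delta1), 0) \<in> Z1 M"
proof -
  have "restrict (\<lambda>\<tau>. p) Delta1 \<in> simp1 M"
    using assms unfolding simp1_def smooth_map_on_def
    by (auto intro!: exI[of _ UNIV] exI[of _ "\<lambda>x. p"] simp: Cinf_on_def Ck_on_const)
  then show ?thesis
    by (simp add: Z1_def keys_frag_of gbd_def bd1_def src_push_def tgt_push_def Delta1_def)
qed

lemma loop_arrow_cycle:
  assumes "g \<in> SU2" "p \<in> M" "rot g p = p"
  shows "(0, frag_of (g, p)) \<in> Z1 M"
  using assms by (simp add: Z1_def keys_frag_of gbd_def bd1_def src_push_def tgt_push_def)

text \<open>Condition (5) for g = h = 1 says that \<Psi> vanishes on identity arrows.\<close>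
lemma Psi_identity_arrow:
  assumes "\<forall>g\<in>SU2. \<forall>h\<in>SU2. \<forall>x\<in>M.
             \<Psi> (0, frag_of (h, x) - frag_of (qmul g h, x) + frag_of (g, rot h x)) \<in> \<int>"
    and "p \<in> M"
  shows "\<Psi> (0, frag_of ((1, 0), p)) \<in> \<int>"
proof -
  have "((1, 0) :: quat) \<in> SU2" "qmul (1, 0) (1, 0) = (1, 0)" "rot (1, 0) p = p"
    by (simp_all add: SU2_def qmul_def rot_def)
  then show ?thesis using assms by (metis diff_self add.left_neutral)
qed

text \<open>On the stabiliser of p, \<Psi> is given by the moment map: for X parallel to p the cycle
  (0, (exp X, p)) differs from (\<sigma>_{X,p}, (exp X, p)) by the constant path at p, on which \<Psi>
  vanishes by condition (4) for X = 0.\<close>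
lemma Psi_on_stabiliser:
  assumes p: "p \<in> M"
    and hom: "\<forall>a\<in>Z1 M. \<forall>b\<in>Z1 M. \<Psi> (gadd a b) - \<Psi> a - \<Psi> b \<in> \<int>"
    and cond4: "\<forall>X. \<Psi> (frag_of (sigmaXp X p), frag_of (qexp X, p)) - \<mu> p \<bullet> X \<in> \<int>"
    and identity: "\<Psi> (0, frag_of ((1, 0), p)) \<in> \<int>"
  shows "\<Psi> (0, frag_of (qexp (k *\<^sub>R p), p)) - \<mu> p \<bullet> (k *\<^sub>R p) \<in> \<int>"
proof -
  define A :: gchain1 where "A = (frag_of (restrict (\<lambda>\<tau>. p) Delta1), 0)"
  define B :: gchain1 where "B = (0, frag_of (qexp (k *\<^sub>R p), p))"
  define E :: gchain1 where "E = (0, frag_of ((1, 0), p))"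
  have A: "A \<in> Z1 M" unfolding A_def using p by (rule const_path_cycle)
  have B: "B \<in> Z1 M" unfolding B_def using qexp_in_SU2 p rot_qexp_axis by (rule loop_arrow_cycle)
  have E: "E \<in> Z1 M" unfolding E_def using p by (intro loop_arrow_cycle) (simp_all add: SU2_def rot_def)
  have AE: "gadd A E = (frag_of (sigmaXp 0 p), frag_of (qexp 0, p))"
    using sigmaXp_axis[of 0 p] by (simp add: gadd_def A_def E_def qexp_def)
  have AB: "gadd A B = (frag_of (sigmaXp (k *\<^sub>R p) p), frag_of (qexp (k *\<^sub>R p), p))"
    by (simp add: gadd_def A_def B_def sigmaXp_axis)
  have "\<Psi> (gadd A E) \<in> \<int>" using cond4[rule_format, of 0] unfolding AE by simp
  moreover have "\<Psi> (gadd A E) - \<Psi> A - \<Psi> E \<in> \<int>" using hom A E by blast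
  moreover have "\<Psi> E \<in> \<int>" using identity unfolding E_def .
  ultimately have "\<Psi> (gadd A E) - (\<Psi> (gadd A E) - \<Psi> A - \<Psi> E) - \<Psi> E \<in> \<int>"
    by (rule Ints_diff[OF Ints_diff])
  then have A_int: "\<Psi> A \<in> \<int>" by simp
  have "\<Psi> (gadd A B) - \<mu> p \<bullet> (k *\<^sub>R p) \<in> \<int>" using cond4 unfolding AB by blast
  moreover have "\<Psi> (gadd A B) - \<Psi> A - \<Psi> B \<in> \<int>" using hom A B by blast
  ultimately have "(\<Psi> (gadd A B) - \<mu> p \<bullet> (k *\<^sub>R p)) - (\<Psi> (gadd A B) - \<Psi> A - \<Psi> B) - \<Psi> A \<in> \<int>"
    using A_int by (rule Ints_diff[OF Ints_diff])
  then show ?thesis unfolding B_def[symmetric] by (simp add: algebra_simps)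
qed

theorem mainTheorem8:
  fixes \<xi> :: "real^3"
    and M :: "(real^3) set"
    and \<omega> :: "real^3 \<Rightarrow> real^3 \<Rightarrow> real^3 \<Rightarrow> real"
    and \<mu> :: "real^3 \<Rightarrow> real^3"
    and \<Psi> :: "gchain1 \<Rightarrow> real"
  assumes xi: "\<xi> \<noteq> 0"
    and M_def: "M = coadj_orbit \<xi>"
    \<comment> \<open>(1) smoothness and invariance / equivariance\<close>
    and om_smooth: "smooth_2form M \<omega>"
    and om_inv: "\<forall>g\<in>SU2. \<forall>x\<in>M. \<forall>u v. tangent x u \<longrightarrow> tangent x v \<longrightarrow>
                   \<omega> (rot g x) (rot g u) (rot g v) = \<omega> x u v"
    and mu_smooth: "smooth_map_on M \<mu>"
    and mu_equiv: "\<forall>g\<in>SU2. \<forall>x\<in>M. \<mu> (rot g x) = rot g (\<mu> x)"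
    and Psi_hom: "\<forall>a\<in>Z1 M. \<forall>b\<in>Z1 M. \<Psi> (gadd a b) - \<Psi> a - \<Psi> b \<in> \<int>"
    and Psi_inv: "\<forall>g\<in>SU2. \<forall>c\<in>Z1 M. \<Psi> (gact g c) - \<Psi> c \<in> \<int>"
    \<comment> \<open>(2) moment map condition\<close>
    and moment: "\<forall>x\<in>M. \<forall>X u. tangent x u \<longrightarrow>
                   \<omega> x (cross3 X x) u = - (frechet_derivative \<mu> (at x within M) u \<bullet> X)"
    \<comment> \<open>(3) curvature condition\<close>
    and curv: "\<forall>c. Poly_Mapping.keys c \<subseteq> simp2 M \<longrightarrow> \<Psi> (bd2 c, 0) - int2_chain \<omega> c \<in> \<int>"
    \<comment> \<open>(4)\<close>
    and cond4: "\<forall>p\<in>M. \<forall>X. \<Psi> (frag_of (sigmaXp X p), frag_of (qexp X, p)) - \<mu> p \<bullet> X \<in> \<int>"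
    \<comment> \<open>(5) multiplicativity on composable pairs\<close>
    and cond5: "\<forall>g\<in>SU2. \<forall>h\<in>SU2. \<forall>x\<in>M.
                   \<Psi> (0, frag_of (h, x) - frag_of (qmul g h, x) + frag_of (g, rot h x)) \<in> \<int>"
  shows "\<forall>p\<in>M. \<Psi> (0, frag_of (qminus1, p)) - int_sphere (norm \<xi>) \<omega> / 2 \<in> \<int>"
proof
  fix p assume p: "p \<in> M"
  define r where "r = norm \<xi>"
  have r: "r > 0" and M: "M = sphere 0 r"
    using xi M_def coadj_orbit_eq_sphere by (simp_all add: r_def)
  obtain c where radial: "\<forall>x\<in>M. \<mu> x = c *\<^sub>R x"
    using equivariant_map_radial[OF xi] mu_equiv M_def by blast
  have "\<omega> x v u = - (c * (u \<bullet> cross3 x v)) / r^2"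
    if x: "x \<in> sphere 0 r" and v: "v \<bullet> x = 0" and u: "u \<bullet> x = 0" for x v u
  proof -
    have "x \<noteq> 0" "x \<bullet> x = r^2" using x r by (auto simp: dot_square_norm)
    moreover have "frechet_derivative \<mu> (at x within M) u = c *\<^sub>R u"
      using radial_map_derivative[OF r _ _ x u] mu_smooth radial M by simp
    ultimately show ?thesis
      using form_from_moment_map[OF _ v] moment x u by (simp add: M tangent_def)
  qed
  then have half_integral: "int_sphere r \<omega> / 2 = - 2 * pi * c * r"
    using int_sphere_radial_form[OF r, of \<omega> c] by simp
  define X where "X = (- 2 * pi / r) *\<^sub>R p"
  have "norm X = 2 * pi" using r p M by (simp add: X_def)
  then have exp_X: "qexp X = qminus1" by (simp add: qexp_def qminus1_def)
  have mu_X: "\<mu> p \<bullet> X = - 2 * pi * c * r"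
    using radial p r M by (simp add: X_def dot_square_norm power2_eq_square)
  have cond4_p: "\<forall>X. \<Psi> (frag_of (sigmaXp X p), frag_of (qexp X, p)) - \<mu> p \<bullet> X \<in> \<int>"
    using cond4 p by blast
  have "\<Psi> (0, frag_of (qexp X, p)) - \<mu> p \<bullet> X \<in> \<int>"
    unfolding X_def
    by (rule Psi_on_stabiliser[where \<Psi> = \<Psi> and \<mu> = \<mu>,
          OF p Psi_hom cond4_p Psi_identity_arrow[OF cond5 p]])
  then show "\<Psi> (0, frag_of (qminus1, p)) - int_sphere (norm \<xi>) \<omega> / 2 \<in> \<int>"
    unfolding r_def[symmetric] half_integral exp_X mu_X .
qed

end
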